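(* Let $b_1<b_2$ and $T\ge b_1+b_2$ be positive integers, write $T-b_1=pb_2+q$ with $p\ge 1$ and $1\le q<b_2$, and assume $\frac{T-b_2}{b_1}\ge\left\lfloor\frac{T-b_1}{b_2}\right\rfloor+1=p+1$. Let the SR link use the SR-2 code and the RD link use the RD code (defined in the context, $k=T-b_1$, $n=T-b_1+b_2$), and let the relay send $R[t]=(s_1[t-t_1],\dots,s_k[t-t_k])$ (entries with negative time set to $0$), where $(t_1,\dots,t_k)$ is the delay profile $t_j=(p+1)b_1$ for $j\in[1,q]$ and $t_j=(p-l+1)b_1$ for $j\in[(l-1)b_2+q+1,lb_2+q]$, $l\in[p]$. Then this TBSC is valid and has rate $\frac{T-b_1}{T-b_1+b_2}=R(b_1,b_2,T)$.
   Context: Convention: $m\bmod n$ denotes the representative of $m$ modulo $n$ in $\{1,\dots,n\}$. Point-to-point code: given $P_0,\dots,P_M\in\mathbb F^{k\times(n-k)}$ ($P_i=0$ for $i\notin[0,M]$), messages $S[t]=(s_1[t],\dots,s_k[t])$ ($S[t]=0$ for $t<0$) are sent as $(S[t],P[t])$, $P[t]=\sum_{i=0}^M S[t-i]P_i$; a $(b,M)$ burst channel erases packets so that in every window of $M+1$ consecutive slots the erased slots form at most one run of consecutive slots of length at most $b$. SR-2 code (burst $b_1$, memory $T-b_2$): $P_i\in\mathbb F_2^{k\times b_2}$: (a) for $j\in[p]$, $P_{jb_1}$ has $I_{b_2}$ in rows $(p-j)b_2+q+1,\dots,(p-j+1)b_2+q$, zeros elsewhere; (b) $P_{(p+1)b_1}(r,r)=1$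 for $r\in[q]$, zeros elsewhere; (c) all other $P_i=0$. RD code (burst $b_2$, memory $T-b_1$, applied to $R[t]$): $P'_i\in\mathbb F_2^{k\times b_2}$: (I) for $i\in[b_2-1]$, a single $1$ at $(i\bmod q,\,q+(i\bmod(b_2-q)))$; (II) $P'_{b_2}(r,r)=1$ for $r\in[q]$, zeros elsewhere; (III) for $j\in[p]$, $P'_{jb_2+q}$ has $I_{b_2}$ in rows $(j-1)b_2+q+1,\dots,jb_2+q$, zeros elsewhere; (IV) all other $P'_i=0$. TBSC: SR erasures are bursts of length $\le b_1$ in every window of $T+1$ slots, RD erasures bursts of length $\le b_2$ in every window of $T+1$ slots; valid means the destination recovers every $S[t]$ by time $t+T$. $R(b_1,b_2,T)=\min\{\frac{T-b_1}{T-b_1+b_2},\frac{T-b_2}{T-b_2+b_1}\}$. *)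

theory Defs
  imports Complex_Main "HOL-Library.Z2"
begin

text \<open>Field: F_2 is the type bit (HOL-Library.Z2). A message sequence is S :: int => nat => bit, with
  S t j the j-th symbol (j in 1..k) at time t. Code matrices are given as
  G :: nat => nat => nat => bit, G i r c = entry (r,c) of P_i (rows 1..k, columns 1..n-k).\<close>

definition msg_seq :: "(int \<Rightarrow> nat \<Rightarrow> bit) \<Rightarrow> bool" where
  "msg_seq S \<longleftrightarrow> (\<forall>t<0. \<forall>j. S t j = 0)"

definition parity :: "nat \<Rightarrow> nat \<Rightarrow> (nat \<Rightarrow> nat \<Rightarrow> nat \<Rightarrow> bit) \<Rightarrow> (int \<Rightarrow> nat \<Rightarrow> bit) \<Rightarrow> int \<Rightarrow> nat \<Rightarrow> bit" where
  "parity k M G X t c =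
     (\<Sum>i\<in>{0..M}. \<Sum>r\<in>{1..k}. (if t - int i < 0 then 0 else X (t - int i) r) * G i r c)"

definition packet :: "nat \<Rightarrow> nat \<Rightarrow> (nat \<Rightarrow> nat \<Rightarrow> nat \<Rightarrow> bit) \<Rightarrow> (int \<Rightarrow> nat \<Rightarrow> bit) \<Rightarrow> int \<Rightarrow> nat \<Rightarrow> bit" where
  "packet k M G X t j =
     (if j \<le> k then (if t < 0 then 0 else X t j) else parity k M G X t (j - k))"

definition burst_pattern :: "nat \<Rightarrow> nat \<Rightarrow> int set \<Rightarrow> bool" where
  "burst_pattern b W E \<longleftrightarrow>
     (\<forall>s::int. \<exists>a::int. \<exists>l::nat. l \<le> b \<and> E \<inter> {s..<s + int W} = {a..<a + int l})"

definition mod1 :: "nat \<Rightarrow> nat \<Rightarrow> nat" where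
  "mod1 m n = (if m mod n = 0 then n else m mod n)"

definition sr2 :: "nat \<Rightarrow> nat \<Rightarrow> nat \<Rightarrow> nat \<Rightarrow> nat \<Rightarrow> nat \<Rightarrow> nat \<Rightarrow> bit" where
  "sr2 b1 b2 p q i r c =
     (if (\<exists>j\<in>{1..p}. i = j * b1 \<and> r = (p - j) * b2 + q + c \<and> 1 \<le> c \<and> c \<le> b2) then 1
      else if i = (p + 1) * b1 \<and> r = c \<and> 1 \<le> r \<and> r \<le> q then 1
      else 0)"

definition rd :: "nat \<Rightarrow> nat \<Rightarrow> nat \<Rightarrow> nat \<Rightarrow> nat \<Rightarrow> nat \<Rightarrow> bit" where
  "rd b2 p q i r c =
     (if 1 \<le> i \<and> i \<le> b2 - 1 \<and> r = mod1 i q \<and> c = q + mod1 i (b2 - q) then 1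
      else if i = b2 \<and> r = c \<and> 1 \<le> r \<and> r \<le> q then 1
      else if (\<exists>j\<in>{1..p}. i = j * b2 + q \<and> r = (j - 1) * b2 + q + c \<and> 1 \<le> c \<and> c \<le> b2) then 1
      else 0)"

definition delay :: "nat \<Rightarrow> nat \<Rightarrow> nat \<Rightarrow> nat \<Rightarrow> nat \<Rightarrow> nat" where
  "delay b1 b2 p q j =
     (if j \<le> q then (p + 1) * b1
      else (THE d. \<exists>l\<in>{1..p}. (l - 1) * b2 + q + 1 \<le> j \<and> j \<le> l * b2 + q \<and> d = (p - l + 1) * b1))"

definition relay_seq :: "(nat \<Rightarrow> nat) \<Rightarrow> (int \<Rightarrow> nat \<Rightarrow> bit) \<Rightarrow> int \<Rightarrow> nat \<Rightarrow> bit" where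
  "relay_seq d S t j = (if t - int (d j) < 0 then 0 else S (t - int (d j)) j)"

text \<open>Recoverability is expressed as: the observation determines the value.\<close>
definition tbsc_valid ::
  "nat \<Rightarrow> nat \<Rightarrow> nat \<Rightarrow> nat \<Rightarrow> nat \<Rightarrow>
   (nat \<Rightarrow> nat \<Rightarrow> nat \<Rightarrow> bit) \<Rightarrow> nat \<Rightarrow>
   ((int \<Rightarrow> nat \<Rightarrow> bit) \<Rightarrow> int \<Rightarrow> nat \<Rightarrow> bit) \<Rightarrow>
   (nat \<Rightarrow> nat \<Rightarrow> nat \<Rightarrow> bit) \<Rightarrow> nat \<Rightarrow> bool" where
  "tbsc_valid b1 b2 T k n GS MS Rel GD MD \<longleftrightarrow>
     (\<forall>E1. burst_pattern b1 (T + 1) E1 \<longrightarrow>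
        (\<forall>S S' t. msg_seq S \<longrightarrow> msg_seq S' \<longrightarrow>
           (\<forall>u\<le>t. u \<notin> E1 \<longrightarrow> (\<forall>j\<in>{1..n}. packet k MS GS S u j = packet k MS GS S' u j)) \<longrightarrow>
           (\<forall>j\<in>{1..k}. Rel S t j = Rel S' t j))) \<and>
     (\<forall>E2. burst_pattern b2 (T + 1) E2 \<longrightarrow>
        (\<forall>S S' t. msg_seq S \<longrightarrow> msg_seq S' \<longrightarrow> 0 \<le> t \<longrightarrow>
           (\<forall>u\<le>t + int T. u \<notin> E2 \<longrightarrow>
               (\<forall>j\<in>{1..n}. packet k MD GD (Rel S) u j = packet k MD GD (Rel S') u j)) \<longrightarrow>
           (\<forall>j\<in>{1..k}. S t j = S' t j)))"

definition code_rate :: "nat \<Rightarrow> nat \<Rightarrow> real" where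
  "code_rate k n = real k / real n"

definition R_opt :: "nat \<Rightarrow> nat \<Rightarrow> nat \<Rightarrow> real" where
  "R_opt b1 b2 T = min ((real T - real b1) / (real T - real b1 + real b2))
                       ((real T - real b2) / (real T - real b2 + real b1))"

end

theory Submission
  imports Defs
begin

text \<open>
  All maps involved are linear over GF(2), so it suffices to show that an all-zero observation
  forces the relay symbols, resp. the messages, to vanish.

  The relay needs \<open>s\<^sub>j[t - t\<^sub>j]\<close> at time \<open>t\<close>. The SR-2 parity column containing row \<open>j\<close>
  at lag \<open>t\<^sub>j\<close> has at most one nonzero entry at each lag, and its lags are distinct multiples
  \<open>m b\<^sub>1\<close> with \<open>1 \<le> m \<le> p + 1\<close>. So a burst of length \<open>b\<^sub>1\<close> erases at most one of the
  symbols it checks, and if it erases \<open>s\<^sub>j[t - t\<^sub>j]\<close> the parity sent at \<open>t\<close> survives.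

  The destination decodes by induction on time. In the window \<open>[t, t + T]\<close> the burst
  \<open>[a, a + b\<^sub>2)\<close> is first repaired on the first \<open>q\<close> relay rows: on \<open>[a, a + q)\<close> by the
  diagonal \<open>P'\<^sub>b\<^sub>2\<close>, on \<open>[a + q, a + b\<^sub>2)\<close> by the cyclic pattern (I), whose lags with equal
  column residue are \<open>b\<^sub>2 - q\<close> apart. Then \<open>P'\<^sub>l\<^sub>b\<^sub>2\<^sub>+\<^sub>q\<close> recovers the \<open>l\<close>-th block of rows,
  the other blocks being read at lags a multiple of \<open>b\<^sub>2\<close> away. The delay profile and
  \<open>(p + 1) b\<^sub>1 + b\<^sub>2 \<le> T\<close> make every parity used arrive by time \<open>t + T\<close>.
\<close>

lemma bit_add_eq_0_iff: "(x::bit) + y = 0 \<longleftrightarrow> x = y"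
  by (cases x; cases y) simp_all

lemma relay_seq_add:
  "relay_seq d (\<lambda>t j. S t j + S' t j) t j = relay_seq d S t j + relay_seq d S' t j"
  by (simp add: relay_seq_def)

lemma parity_add:
  "parity k M G (\<lambda>t j. X t j + Y t j) u c = parity k M G X u c + parity k M G Y u c"
proof -
  have "(if u - int i < 0 then 0 else X (u - int i) r + Y (u - int i) r) * G i r c =
        (if u - int i < 0 then 0 else X (u - int i) r) * G i r c
      + (if u - int i < 0 then 0 else Y (u - int i) r) * G i r c" for i r
    by (cases "u - int i < 0") (simp_all only: if_True if_False mult_zero_left add_0 distrib_right)
  then show ?thesis
    unfolding parity_def by (simp only: sum.distrib)
qed

lemma packet_add:
  "packet k M G (\<lambda>t j. X t j + Y t j) u c = packet k M G X u c + packet k M G Y u c"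
  unfolding packet_def
  by (cases "c \<le> k"; cases "u < 0") (simp_all only: if_True if_False parity_add add_0)

lemma tbsc_valid_linearI:
  assumes Rel_add: "\<And>S S' t j. Rel (\<lambda>t j. S t j + S' t j) t j = Rel S t j + Rel S' t j"
    and relay: "\<And>E1 D t j. burst_pattern b1 (T + 1) E1 \<Longrightarrow> msg_seq D \<Longrightarrow>
      \<forall>u\<le>t. u \<notin> E1 \<longrightarrow> (\<forall>j\<in>{1..n}. packet k MS GS D u j = 0) \<Longrightarrow>
      j \<in> {1..k} \<Longrightarrow> Rel D t j = 0"
    and dest: "\<And>E2 D t j. burst_pattern b2 (T + 1) E2 \<Longrightarrow> msg_seq D \<Longrightarrow> 0 \<le> t \<Longrightarrow>
      \<forall>u\<le>t + int T. u \<notin> E2 \<longrightarrow> (\<forall>j\<in>{1..n}. packet k MD GD (Rel D) u j = 0) \<Longrightarrow>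
      j \<in> {1..k} \<Longrightarrow> D t j = 0"
  shows "tbsc_valid b1 b2 T k n GS MS Rel GD MD"
  unfolding tbsc_valid_def
proof (intro conjI allI impI ballI)
  fix E1 S S' t j
  assume "burst_pattern b1 (T + 1) E1" "msg_seq S" "msg_seq S'" "j \<in> {1..k}"
    and obs: "\<forall>u\<le>t. u \<notin> E1 \<longrightarrow> (\<forall>j\<in>{1..n}. packet k MS GS S u j = packet k MS GS S' u j)"
  moreover from obs
  have "\<forall>u\<le>t. u \<notin> E1 \<longrightarrow> (\<forall>j\<in>{1..n}. packet k MS GS (\<lambda>t j. S t j + S' t j) u j = 0)"
    by (simp only: packet_add bit_add_eq_0_iff)
  ultimately have "Rel (\<lambda>t j. S t j + S' t j) t j = 0"
    by (intro relay) (auto simp: msg_seq_def)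
  then show "Rel S t j = Rel S' t j"
    by (simp only: Rel_add bit_add_eq_0_iff)
next
  fix E2 S S' t j
  assume "burst_pattern b2 (T + 1) E2" "msg_seq S" "msg_seq S'" "0 \<le> t" "j \<in> {1..k}"
    and obs: "\<forall>u\<le>t + int T. u \<notin> E2 \<longrightarrow>
      (\<forall>j\<in>{1..n}. packet k MD GD (Rel S) u j = packet k MD GD (Rel S') u j)"
  moreover have "Rel (\<lambda>t j. S t j + S' t j) = (\<lambda>t j. Rel S t j + Rel S' t j)"
    by (intro ext) (rule Rel_add)
  with obs have "\<forall>u\<le>t + int T. u \<notin> E2 \<longrightarrow>
      (\<forall>j\<in>{1..n}. packet k MD GD (Rel (\<lambda>t j. S t j + S' t j)) u j = 0)"
    by (simp only: packet_add bit_add_eq_0_iff)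
  ultimately have "S t j + S' t j = 0"
    by (intro dest[of E2 "\<lambda>t j. S t j + S' t j"]) (auto simp: msg_seq_def)
  then show "S t j = S' t j"
    by (simp only: bit_add_eq_0_iff)
qed

lemma parity_eq_0_isolate:
  fixes X :: "int \<Rightarrow> nat \<Rightarrow> bit"
  assumes neg: "\<And>x r. x < 0 \<Longrightarrow> X x r = 0"
    and par: "parity k M G X u c = 0"
    and i0: "i0 \<le> M" and r0: "r0 \<in> {1..k}" and G0: "G i0 r0 c = 1"
    and others: "\<And>i r. i \<le> M \<Longrightarrow> r \<in> {1..k} \<Longrightarrow> (i, r) \<noteq> (i0, r0) \<Longrightarrow>
      G i r c = 1 \<Longrightarrow> X (u - int i) r = 0"
  shows "X (u - int i0) r0 = 0"
proof -
  define f where "f = (\<lambda>(i, r). X (u - int i) r * G i r c)"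
  have "parity k M G X u c = (\<Sum>x\<in>{0..M} \<times> {1..k}. f x)"
    unfolding parity_def f_def sum.cartesian_product[symmetric]
    by (intro sum.cong refl) (simp add: neg)
  also have "\<dots> = f (i0, r0) + (\<Sum>x\<in>{0..M} \<times> {1..k} - {(i0, r0)}. f x)"
    by (rule sum.remove) (use i0 r0 in auto)
  also have "(\<Sum>x\<in>{0..M} \<times> {1..k} - {(i0, r0)}. f x) = 0"
  proof (intro sum.neutral ballI)
    fix x assume "x \<in> {0..M} \<times> {1..k} - {(i0, r0)}"
    then show "f x = 0"
      using others by (cases x; cases "G (fst x) (snd x) c") (auto simp: f_def)
  qed
  finally show ?thesis
    using par G0 by (simp add: f_def)
qed

lemma mod1_bounds: "0 < n \<Longrightarrow> mod1 m n \<in> {1..n}"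
  by (auto simp: mod1_def less_imp_le)

lemma mod1_eq_iff: "0 < n \<Longrightarrow> mod1 m n = mod1 m' n \<longleftrightarrow> m mod n = m' mod n"
  unfolding mod1_def by (metis mod_less_divisor less_irrefl)

lemma mod1_eqI: "c \<in> {1..n} \<Longrightarrow> m mod n = c mod n \<Longrightarrow> mod1 m n = c"
  unfolding mod1_def by (cases "c = n") auto

lemma exists_shift_mod1:
  assumes "c \<in> {1..q}"
  obtains w where "w < q" "mod1 (w + e) q = c"
proof
  define w where "w = (c + q - e mod q) mod q"
  show "w < q"
    using assms by (simp add: w_def)
  have "e mod q < q"
    using assms by simp
  have "(w + e) mod q = ((c + q - e mod q) + e) mod q"
    by (simp add: w_def mod_add_left_eq)
  also have "(c + q - e mod q) + e = c + q + q * (e div q)"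
    using mult_div_mod_eq[of q e] \<open>e mod q < q\<close> by linarith
  also have "(c + q + q * (e div q)) mod q = c mod q"
    by simp
  finally show "mod1 (w + e) q = c"
    using assms by (rule mod1_eqI[rotated])
qed

lemma eq_if_mod_eq_in_window:
  fixes x y s n :: nat
  assumes "x mod n = y mod n" "s < x" "x \<le> s + n" "s < y" "y \<le> s + n"
  shows "x = y"
proof -
  have "a = b" if ab: "a mod n = b mod n" "a \<le> b" "s < a" "b \<le> s + n" for a b :: nat
  proof -
    obtain k where "b = a + n * k"
      using mod_eq_nat1E[OF ab(1)[symmetric] ab(2)] .
    then show ?thesis
      using ab by (cases k) auto
  qed
  then show ?thesis
    using assms by (metis nat_le_linear)
qed

lemma lag_gap: "(m::nat) \<noteq> m' \<Longrightarrow> int b \<le> \<bar>int (m * b) - int (m' * b)\<bar>"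
proof -
  assume "m \<noteq> m'"
  then have "1 \<le> \<bar>int m - int m'\<bar>" by linarith
  then have "1 * int b \<le> \<bar>int m - int m'\<bar> * int b" by (rule mult_right_mono) simp
  also have "\<dots> = \<bar>(int m - int m') * int b\<bar>" by (simp add: abs_mult)
  also have "\<dots> = \<bar>int (m * b) - int (m' * b)\<bar>" by (simp add: left_diff_distrib)
  finally show ?thesis by simp
qed

lemma burst_pattern_window:
  assumes "burst_pattern b W E"
  obtains a where "\<And>x. x \<in> E \<Longrightarrow> s \<le> x \<Longrightarrow> x < s + int W \<Longrightarrow> a \<le> x \<and> x < a + int b"
proof -
  obtain a l where "l \<le> b" "E \<inter> {s..<s + int W} = {a..<a + int l}"
    using assms unfolding burst_pattern_def by blast
  then have "a \<le> x \<and> x < a + int b" if "x \<in> E" "s \<le> x" "x < s + int W" for x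
    using that by (metis (full_types) IntI atLeastLessThan_iff of_nat_mono add_left_mono
        order_less_le_trans)
  then show thesis by (rule that)
qed

lemma sr2_cases:
  assumes "sr2 b1 b2 p q i r c = 1"
  shows "(\<exists>j\<in>{1..p}. i = j * b1 \<and> r = (p - j) * b2 + q + c \<and> 1 \<le> c \<and> c \<le> b2)
       \<or> (i = (p + 1) * b1 \<and> r = c \<and> 1 \<le> r \<and> r \<le> q)"
  using assms unfolding sr2_def by (auto split: if_splits)

lemma rd_cases:
  assumes "rd b2 p q i r c = 1"
  shows "(1 \<le> i \<and> i \<le> b2 - 1 \<and> r = mod1 i q \<and> c = q + mod1 i (b2 - q))
       \<or> (i = b2 \<and> r = c \<and> 1 \<le> r \<and> r \<le> q)
       \<or> (\<exists>j\<in>{1..p}. i = j * b2 + q \<and> r = (j - 1) * b2 + q + c \<and> 1 \<le> c \<and> c \<le> b2)"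
  using assms unfolding rd_def by (auto split: if_splits)

lemma R_opt_eq:
  fixes b1 b2 T :: nat
  assumes "0 < b1" "b1 \<le> b2" "b1 + b2 \<le> T"
  shows "R_opt b1 b2 T = real (T - b1) / real (T - b1 + b2)"
proof -
  define x where "x = real T - real b1"
  define y where "y = real T - real b2"
  have "0 < x" "0 < y"
    using assms unfolding x_def y_def by auto
  moreover have "x * real b1 \<le> y * real b2"
  proof -
    have "0 \<le> (real b2 - real b1) * (real T - real b1 - real b2)"
      using assms by (intro mult_nonneg_nonneg) auto
    then show ?thesis
      unfolding x_def y_def by (simp add: algebra_simps)
  qed
  ultimately have "x / (x + real b2) \<le> y / (y + real b1)"
    by (simp add: divide_simps algebra_simps)
  moreover have "real (T - b1) = x" "real (T - b1 + b2) = x + real b2"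
    using assms unfolding x_def by auto
  ultimately show ?thesis
    unfolding R_opt_def x_def y_def by (simp add: min_def)
qed

locale relay_code_params =
  fixes b1 b2 T p q :: nat
  assumes b1_pos: "0 < b1" and b1_less_b2: "b1 < b2"
    and T_eq: "T = p * b2 + q + b1" and p_pos: "1 \<le> p" and q_pos: "1 \<le> q"
    and q_less_b2: "q < b2"
    and head_delay_fits: "(p + 1) * b1 + b2 \<le> T"
begin

lemma q_le_k: "q \<le> T - b1"
  using T_eq by simp

lemma b2_le_k: "b2 \<le> T - b1"
proof -
  have "b2 \<le> p * b2"
    using p_pos by simp
  then show ?thesis
    using T_eq by linarith
qed

lemma block_delay_fits:
  assumes "1 \<le> l" "l \<le> p"
  shows "(p - l + 1) * b1 + l * b2 + q \<le> T"
proof -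
  have "(p - l) * b1 \<le> (p - l) * b2"
    using b1_less_b2 by simp
  moreover have "(p - l) * b2 + l * b2 = p * b2"
    using assms by (simp add: add_mult_distrib[symmetric])
  moreover have "(p - l + 1) * b1 = (p - l) * b1 + b1"
    by simp
  ultimately show ?thesis
    using T_eq by linarith
qed

lemma block_row_bound:
  "1 \<le> l \<Longrightarrow> l \<le> p \<Longrightarrow> c \<le> b2 \<Longrightarrow> (l - 1) * b2 + q + c \<le> T - b1"
  using T_eq mult_le_mono1[of l p b2] by (cases l) auto

lemma block_decomp:
  assumes "q < j" "j \<le> T - b1"
  obtains l c where "1 \<le> l" "l \<le> p" "1 \<le> c" "c \<le> b2" "j = (l - 1) * b2 + q + c"
proof
  let ?l = "(j - q - 1) div b2 + 1" and ?c = "(j - q - 1) mod b2 + 1"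
  show "j = (?l - 1) * b2 + q + ?c"
    using assms div_mult_mod_eq[of "j - q - 1" b2] by simp
  have "j - q - 1 < p * b2"
    using assms T_eq by linarith
  then show "?l \<le> p"
    using b1_less_b2 by (simp add: div_less_iff_less_mult Suc_le_eq)
  show "?c \<le> b2"
    using b1_less_b2 by (simp add: Suc_le_eq)
qed simp_all

lemma delay_head: "j \<le> q \<Longrightarrow> delay b1 b2 p q j = (p + 1) * b1"
  by (simp add: delay_def)

lemma delay_block:
  assumes l: "1 \<le> l" "l \<le> p" and c: "1 \<le> c" "c \<le> b2"
  shows "delay b1 b2 p q ((l - 1) * b2 + q + c) = (p - l + 1) * b1"
proof -
  let ?j = "(l - 1) * b2 + q + c"
  have "(THE d. \<exists>l'\<in>{1..p}. (l' - 1) * b2 + q + 1 \<le> ?j \<and> ?j \<le> l' * b2 + q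
          \<and> d = (p - l' + 1) * b1) = (p - l + 1) * b1"
  proof (rule the_equality)
    have "(l - 1) * b2 + b2 = l * b2"
      using l(1) by (cases l) auto
    then show "\<exists>l'\<in>{1..p}. (l' - 1) * b2 + q + 1 \<le> ?j \<and> ?j \<le> l' * b2 + q
            \<and> (p - l + 1) * b1 = (p - l' + 1) * b1"
      using l c by (intro bexI[of _ l]) auto
  next
    fix d
    assume "\<exists>l'\<in>{1..p}. (l' - 1) * b2 + q + 1 \<le> ?j \<and> ?j \<le> l' * b2 + q
              \<and> d = (p - l' + 1) * b1"
    then obtain l' where l': "1 \<le> l'" "(l' - 1) * b2 < (l - 1) * b2 + c" "?j \<le> l' * b2 + q"
      and d: "d = (p - l' + 1) * b1"
      by auto
    have "(l' - 1) * b2 < l * b2"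
      using l'(2) c l by (cases l) auto
    then have "l' - 1 < l"
      by (simp add: mult_less_cancel2)
    have "(l - 1) * b2 < l' * b2"
      using l'(3) c by linarith
    then have "l - 1 < l'"
      by (simp add: mult_less_cancel2)
    with \<open>l' - 1 < l\<close> have "l' = l"
      using l(1) l'(1) by linarith
    then show "d = (p - l + 1) * b1"
      using d by simp
  qed
  then show ?thesis
    using c by (simp add: delay_def)
qed

lemma sr2_row_unique:
  assumes "sr2 b1 b2 p q i r c = 1" "sr2 b1 b2 p q i r' c = 1"
  shows "r = r'"
proof -
  have lag_ne: False if "j \<le> p" "j * b1 = (p + 1) * b1" for j
    using mult_le_mono1[OF that(1), of b1] that(2) b1_pos
    by (simp only: add_mult_distrib mult_1)
  from sr2_cases[OF assms(1)] sr2_cases[OF assms(2)] show ?thesis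
    by (elim disjE bexE conjE) (use b1_pos lag_ne in auto)
qed

lemma sr2_lag:
  assumes "sr2 b1 b2 p q i r c = 1"
  obtains m where "1 \<le> m" "m \<le> p + 1" "i = m * b1"
  using sr2_cases[OF assms]
proof (elim disjE bexE conjE)
  fix j assume "j \<in> {1..p}" "i = j * b1"
  then show thesis using that[of j] by simp
next
  assume "i = (p + 1) * b1"
  then show thesis using that[of "p + 1"] by simp
qed

lemma sr2_lag_bounds:
  assumes "sr2 b1 b2 p q i r c = 1"
  shows "b1 \<le> i" "i \<le> T - b2"
proof -
  obtain m where "1 \<le> m" "m \<le> p + 1" "i = m * b1"
    using sr2_lag[OF assms] .
  then show "b1 \<le> i" "i \<le> T - b2"
    using mult_le_mono1[of 1 m b1] mult_le_mono1[of m "p + 1" b1] head_delay_fits by auto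
qed

lemma sr2_lag_gap:
  assumes "sr2 b1 b2 p q i r c = 1" "sr2 b1 b2 p q i' r' c = 1" "(i, r) \<noteq> (i', r')"
  shows "int b1 \<le> \<bar>int i - int i'\<bar>"
proof -
  obtain m m' where "i = m * b1" "i' = m' * b1"
    using sr2_lag[OF assms(1)] sr2_lag[OF assms(2)] by metis
  moreover have "i \<noteq> i'"
    using assms sr2_row_unique by blast
  ultimately show ?thesis
    using lag_gap[of m m' b1] by auto
qed

lemma sr2_relay_entry:
  assumes j: "j \<in> {1..T - b1}"
  obtains c where "c \<in> {1..b2}" "sr2 b1 b2 p q (delay b1 b2 p q j) j c = 1"
proof (cases "j \<le> q")
  case True
  then have "sr2 b1 b2 p q (delay b1 b2 p q j) j j = 1"
    using j by (simp add: sr2_def delay_head)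
  moreover have "j \<in> {1..b2}"
    using True j q_less_b2 by simp
  ultimately show thesis
    by (rule that[rotated])
next
  case False
  then obtain l c where l: "1 \<le> l" "l \<le> p" and c: "1 \<le> c" "c \<le> b2"
    and je: "j = (l - 1) * b2 + q + c"
    using block_decomp[of j] j by auto
  have "\<exists>j'\<in>{1..p}. (p - l + 1) * b1 = j' * b1 \<and> j = (p - j') * b2 + q + c \<and> 1 \<le> c \<and> c \<le> b2"
    using l c je by (intro bexI[of _ "p - l + 1"]) auto
  then have "sr2 b1 b2 p q (delay b1 b2 p q j) j c = 1"
    unfolding je delay_block[OF l c] by (simp add: sr2_def)
  then show thesis
    using that c by simp
qed

lemma relay_recovers:
  assumes E1: "burst_pattern b1 (T + 1) E1" and D: "msg_seq D"
    and obs: "\<forall>u\<le>t. u \<notin> E1 \<longrightarrow>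
      (\<forall>j\<in>{1..T - b1 + b2}. packet (T - b1) (T - b2) (sr2 b1 b2 p q) D u j = 0)"
    and j: "j \<in> {1..T - b1}"
  shows "relay_seq (delay b1 b2 p q) D t j = 0"
proof -
  obtain a where burst: "\<And>x. x \<in> E1 \<Longrightarrow> t - int T \<le> x \<Longrightarrow> x \<le> t \<Longrightarrow> a \<le> x \<and> x < a + int b1"
    using burst_pattern_window[OF E1, where s = "t - int T"] by force
  have neg: "\<And>x r. x < 0 \<Longrightarrow> D x r = 0"
    using D by (simp add: msg_seq_def)
  have known: "D x r = 0" if "x \<le> t" "x \<notin> E1" "r \<in> {1..T - b1}" for x r
  proof (cases "x < 0")
    case False
    have "packet (T - b1) (T - b2) (sr2 b1 b2 p q) D x r = 0"
      using obs that by auto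
    then show ?thesis
      using False that by (simp add: packet_def)
  qed (use neg in simp)
  define d where "d = delay b1 b2 p q j"
  obtain c where c: "c \<in> {1..b2}" and G0: "sr2 b1 b2 p q d j c = 1"
    using sr2_relay_entry[OF j] unfolding d_def .
  note d = sr2_lag_bounds[OF G0]
  have "D (t - int d) j = 0" if "0 \<le> t - int d"
  proof (cases "t - int d \<in> E1")
    case False
    then show ?thesis using known j by simp
  next
    case True
    have "a \<le> t - int d" "t - int d < a + int b1"
      using burst[OF True] d by auto
    then have far: "x \<notin> E1" if "t - int T \<le> x" "x \<le> t" "int b1 \<le> \<bar>x - (t - int d)\<bar>" for x
      using that burst[of x] by (auto simp: abs_if split: if_split_asm)
    have "t \<notin> E1"
      using far d by auto
    then have "packet (T - b1) (T - b2) (sr2 b1 b2 p q) D t (T - b1 + c) = 0"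
      using obs c by auto
    then have par: "parity (T - b1) (T - b2) (sr2 b1 b2 p q) D t c = 0"
      using c by (simp add: packet_def)
    show ?thesis
    proof (rule parity_eq_0_isolate[OF neg par d(2) j G0])
      fix i r
      assume "i \<le> T - b2" "r \<in> {1..T - b1}" "(i, r) \<noteq> (d, j)" "sr2 b1 b2 p q i r c = 1"
      then show "D (t - int i) r = 0"
        using far[of "t - int i"] sr2_lag_gap[of i r c d j] G0 known by (simp add: abs_minus_commute)
    qed
  qed
  then show ?thesis
    by (simp add: relay_seq_def d_def)
qed

end

text \<open>
  One step of the destination's induction on time: the messages before \<open>t\<close> are known and the
  RD burst inside the window \<open>[t, t + T]\<close> is contained in \<open>[a, a + b\<^sub>2)\<close>.
\<close>
locale rd_decoding = relay_code_params +
  fixes D :: "int \<Rightarrow> nat \<Rightarrow> bit" and t a :: int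
  assumes t_nonneg: "0 \<le> t"
    and D_before: "\<And>x j. x < t \<Longrightarrow> j \<in> {1..T - b1} \<Longrightarrow> D x j = 0"
    and packet_zero: "\<And>u j. t \<le> u \<Longrightarrow> u \<le> t + int T \<Longrightarrow> \<not> (a \<le> u \<and> u < a + int b2) \<Longrightarrow>
      j \<in> {1..T - b1 + b2} \<Longrightarrow>
      packet (T - b1) (T - b1) (rd b2 p q) (relay_seq (delay b1 b2 p q) D) u j = 0"
begin

abbreviation R :: "int \<Rightarrow> nat \<Rightarrow> bit" where
  "R \<equiv> relay_seq (delay b1 b2 p q) D"

abbreviation in_burst :: "int \<Rightarrow> bool" where
  "in_burst x \<equiv> a \<le> x \<and> x < a + int b2"

lemma R_neg: "x < 0 \<Longrightarrow> R x r = 0"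
  by (simp add: relay_seq_def)

lemma R_before: "x < t \<Longrightarrow> r \<in> {1..T - b1} \<Longrightarrow> R x r = 0"
  using D_before by (simp add: relay_seq_def)

lemma R_outside_burst:
  assumes "x \<le> t + int T" "\<not> in_burst x" "r \<in> {1..T - b1}"
  shows "R x r = 0"
proof (cases "x < t")
  case True
  then show ?thesis using R_before assms by simp
next
  case False
  then show ?thesis
    using packet_zero[of x r] assms t_nonneg by (simp add: packet_def)
qed

lemma parity_outside_burst:
  assumes "u \<le> t + int T" "\<not> in_burst u" "c \<in> {1..b2}"
  shows "parity (T - b1) (T - b1) (rd b2 p q) R u c = 0"
proof (cases "u < t")
  case True
  then show ?thesis
    unfolding parity_def by (intro sum.neutral ballI) (simp add: R_before)
next
  case False
  then show ?thesis
    using packet_zero[of u "T - b1 + c"] assms by (simp add: packet_def)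
qed

lemma head_rows_early:
  assumes c: "c \<in> {1..q}" and \<tau>: "a \<le> \<tau>" "\<tau> < a + int q" "\<tau> + int b2 \<le> t + int T"
  shows "R \<tau> c = 0"
proof -
  define u where "u = \<tau> + int b2"
  have par: "parity (T - b1) (T - b1) (rd b2 p q) R u c = 0"
    using parity_outside_burst[of u c] \<tau> c q_less_b2 unfolding u_def by auto
  have ck: "c \<in> {1..T - b1}"
    using c q_le_k by simp
  have G0: "rd b2 p q b2 c c = 1"
    using c b1_less_b2 by (simp add: rd_def)
  have "R (u - int b2) c = 0"
  proof (rule parity_eq_0_isolate[OF R_neg par b2_le_k ck G0])
    fix i r
    assume r: "r \<in> {1..T - b1}" and ne: "(i, r) \<noteq> (b2, c)" and G: "rd b2 p q i r c = 1"
    have "mod1 i (b2 - q) \<in> {1..b2 - q}"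
      using mod1_bounds q_less_b2 by simp
    then obtain j where "1 \<le> j" "i = j * b2 + q"
      using rd_cases[OF G] ne c by auto
    moreover from this have "b2 \<le> j * b2"
      by simp
    ultimately have "u - int i < a"
      using \<tau> unfolding u_def by linarith
    then show "R (u - int i) r = 0"
      using R_outside_burst r \<tau> unfolding u_def by simp
  qed
  then show ?thesis
    unfolding u_def by simp
qed

lemma cyclic_column_rest:
  assumes late: "a + int b2 + int q - 1 \<le> t + int T" and w: "w < q"
    and i0: "w < i0" "i0 \<le> w + (b2 - q)"
    and G: "rd b2 p q i r (q + mod1 i0 (b2 - q)) = 1" and r: "r \<in> {1..T - b1}"
    and ne: "(i, r) \<noteq> (i0, mod1 i0 q)"
  shows "R (a + int b2 + int w - int i) r = 0"
proof -
  have uiT: "a + int b2 + int w - int i \<le> t + int T"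
    using late w by linarith
  have "mod1 i0 (b2 - q) \<in> {1..b2 - q}"
    using mod1_bounds q_less_b2 by simp
  with rd_cases[OF G] show ?thesis
  proof (elim disjE bexE conjE)
    assume i: "1 \<le> i" "i \<le> b2 - 1" and ri: "r = mod1 i q"
      and Ci: "q + mod1 i0 (b2 - q) = q + mod1 i (b2 - q)"
    have "i mod (b2 - q) = i0 mod (b2 - q)"
      using Ci mod1_eq_iff[of "b2 - q"] q_less_b2 by simp
    moreover have "i \<noteq> i0"
      using ne ri by auto
    ultimately consider "i \<le> w" | "w + (b2 - q) < i"
      using eq_if_mod_eq_in_window[of i "b2 - q" i0 w] i0 by linarith
    then show ?thesis
    proof cases
      case 1
      then show ?thesis using R_outside_burst uiT r by simp
    next
      case 2
      have "r \<in> {1..q}"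
        using ri mod1_bounds q_pos by simp
      then show ?thesis
        using head_rows_early[of r "a + int b2 + int w - int i"] 2 i w late q_less_b2 by simp
    qed
  next
    fix j assume "j \<in> {1..p}" "i = j * b2 + q"
    moreover from this have "b2 \<le> j * b2"
      by simp
    ultimately have "a + int b2 + int w - int i < a"
      using w by linarith
    then show ?thesis using R_outside_burst uiT r by simp
  qed simp
qed

text \<open>
  The lag \<open>i\<^sub>0 = w + e\<close> with \<open>w < q\<close> is chosen so that the unerased parity at
  \<open>a + b\<^sub>2 + w\<close> reads row \<open>c = mod1 i\<^sub>0 q\<close> at \<open>\<tau> = a + b\<^sub>2 - e\<close>.
\<close>
lemma head_rows_late:
  assumes c: "c \<in> {1..q}" and \<tau>: "a + int q \<le> \<tau>" "\<tau> < a + int b2"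
    and late: "a + int b2 + int q - 1 \<le> t + int T"
  shows "R \<tau> c = 0"
proof -
  define e where "e = nat (a + int b2 - \<tau>)"
  have e: "1 \<le> e" "e \<le> b2 - q" "\<tau> = a + int b2 - int e"
    using \<tau> q_less_b2 unfolding e_def by auto
  obtain w where w: "w < q" and wc: "mod1 (w + e) q = c"
    using exists_shift_mod1[OF c] .
  define i0 where "i0 = w + e"
  define u where "u = a + int b2 + int w"
  have i0: "1 \<le> i0" "i0 \<le> b2 - 1"
    using e w unfolding i0_def by auto
  have "u \<le> t + int T" "\<not> in_burst u"
    using late w unfolding u_def by auto
  moreover have "q + mod1 i0 (b2 - q) \<in> {1..b2}"
    using mod1_bounds[of "b2 - q" i0] q_less_b2 by auto
  ultimately have par: "parity (T - b1) (T - b1) (rd b2 p q) R u (q + mod1 i0 (b2 - q)) = 0"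
    by (rule parity_outside_burst)
  have i0k: "i0 \<le> T - b1"
    using i0 b2_le_k by simp
  have ck: "c \<in> {1..T - b1}"
    using c q_le_k by simp
  have G0: "rd b2 p q i0 c (q + mod1 i0 (b2 - q)) = 1"
    using i0 wc by (simp add: rd_def i0_def)
  have "R (u - int i0) c = 0"
  proof (rule parity_eq_0_isolate[OF R_neg par i0k ck G0])
    fix i r
    assume "r \<in> {1..T - b1}" "(i, r) \<noteq> (i0, c)" "rd b2 p q i r (q + mod1 i0 (b2 - q)) = 1"
    then show "R (u - int i) r = 0"
      using cyclic_column_rest[OF late w, of i0 i r] e wc unfolding u_def i0_def by simp
  qed
  moreover have "u - int i0 = \<tau>"
    using e unfolding u_def i0_def by simp
  ultimately show ?thesis
    by simp
qed

lemma head_rows: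
  assumes late: "a + int b2 + int q - 1 \<le> t + int T"
    and c: "c \<in> {1..q}" and \<tau>: "\<tau> \<le> t + int T"
  shows "R \<tau> c = 0"
proof -
  consider "\<not> in_burst \<tau>" | "a \<le> \<tau>" "\<tau> < a + int q" | "a + int q \<le> \<tau>" "\<tau> < a + int b2"
    by linarith
  then show ?thesis
  proof cases
    case 1
    then show ?thesis using R_outside_burst \<tau> c q_le_k by simp
  next
    case 2
    then show ?thesis using head_rows_early c late by simp
  next
    case 3
    then show ?thesis using head_rows_late c late by simp
  qed
qed

lemma relay_head_zero:
  assumes c: "c \<in> {1..q}"
  shows "R (t + int ((p + 1) * b1)) c = 0"
proof -
  define \<tau> where "\<tau> = t + int ((p + 1) * b1)"
  have \<tau>T: "\<tau> + int b2 \<le> t + int T"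
    using head_delay_fits unfolding \<tau>_def by linarith
  consider "\<tau> < a + int q" | "a + int b2 + int q - 1 \<le> t + int T"
    using \<tau>T by linarith
  then have "R \<tau> c = 0"
  proof cases
    case 1
    then show ?thesis
      using head_rows_early[OF c _ 1 \<tau>T] R_outside_burst[of \<tau> c] \<tau>T c q_le_k by force
  next
    case 2
    then show ?thesis using head_rows \<tau>T c by simp
  qed
  then show ?thesis
    unfolding \<tau>_def .
qed

lemma block_column_rest:
  assumes \<tau>: "in_burst \<tau>" and l: "1 \<le> l" "l \<le> p"
    and uT: "\<tau> + int (l * b2 + q) \<le> t + int T"
    and G: "rd b2 p q i r c = 1" and r: "r \<in> {1..T - b1}"
    and ne: "(i, r) \<noteq> (l * b2 + q, (l - 1) * b2 + q + c)"
  shows "R (\<tau> + int (l * b2 + q) - int i) r = 0"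
proof -
  have "b2 \<le> l * b2"
    using l by simp
  then have late: "a + int b2 + int q - 1 \<le> t + int T"
    using \<tau> uT by linarith
  have uiT: "\<tau> + int (l * b2 + q) - int i \<le> t + int T"
    using uT by simp
  from rd_cases[OF G] show ?thesis
  proof (elim disjE bexE conjE)
    assume "r = mod1 i q"
    then show ?thesis using head_rows[OF late] uiT mod1_bounds q_pos by simp
  next
    assume "r \<le> q"
    then show ?thesis using head_rows[OF late] uiT r by simp
  next
    fix j assume j: "i = j * b2 + q" "r = (j - 1) * b2 + q + c"
    then have "j \<noteq> l"
      using ne by auto
    then have "int b2 \<le> \<bar>\<tau> + int (l * b2 + q) - int i - \<tau>\<bar>"
      using lag_gap[of l j b2] j(1) by simp
    then have "\<not> in_burst (\<tau> + int (l * b2 + q) - int i)"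
      using \<tau> by (auto simp: abs_if split: if_split_asm)
    then show ?thesis
      using R_outside_burst[OF uiT _ r] by simp
  qed
qed

lemma relay_block_zero:
  assumes l: "1 \<le> l" "l \<le> p" and c: "1 \<le> c" "c \<le> b2"
  shows "R (t + int ((p - l + 1) * b1)) ((l - 1) * b2 + q + c) = 0"
proof -
  define \<tau> where "\<tau> = t + int ((p - l + 1) * b1)"
  define r0 where "r0 = (l - 1) * b2 + q + c"
  define i0 where "i0 = l * b2 + q"
  have r0: "r0 \<in> {1..T - b1}"
    using block_row_bound[OF l c(2)] c unfolding r0_def by simp
  have uT: "\<tau> + int i0 \<le> t + int T"
    using block_delay_fits[OF l] unfolding \<tau>_def i0_def by linarith
  show ?thesis
  proof (cases "in_burst \<tau>")
    case False
    then show ?thesis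
      using R_outside_burst r0 uT unfolding \<tau>_def r0_def by simp
  next
    case True
    have "b2 \<le> l * b2"
      using l by simp
    then have "\<not> in_burst (\<tau> + int i0)"
      using True unfolding i0_def by linarith
    then have par: "parity (T - b1) (T - b1) (rd b2 p q) R (\<tau> + int i0) c = 0"
      using parity_outside_burst[OF uT] c by simp
    have i0k: "i0 \<le> T - b1"
      using l T_eq mult_le_mono1[of l p b2] unfolding i0_def by simp
    have G0: "rd b2 p q i0 r0 c = 1"
      using l c q_pos \<open>b2 \<le> l * b2\<close>
      by (auto simp: rd_def i0_def r0_def intro!: bexI[of _ l])
    have "R (\<tau> + int i0 - int i0) r0 = 0"
    proof (rule parity_eq_0_isolate[OF R_neg par i0k r0 G0])
      fix i r
      assume "r \<in> {1..T - b1}" "(i, r) \<noteq> (i0, r0)" "rd b2 p q i r c = 1"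
      then show "R (\<tau> + int i0 - int i) r = 0"
        using block_column_rest[OF True l uT[unfolded i0_def]] unfolding i0_def r0_def by blast
    qed
    then show ?thesis
      unfolding \<tau>_def r0_def by simp
  qed
qed

lemma message_zero:
  assumes j: "j \<in> {1..T - b1}"
  shows "D t j = 0"
proof (cases "j \<le> q")
  case True
  then show ?thesis
    using relay_head_zero[of j] j t_nonneg by (simp add: relay_seq_def delay_head)
next
  case False
  then obtain l c where l: "1 \<le> l" "l \<le> p" and c: "1 \<le> c" "c \<le> b2"
    and je: "j = (l - 1) * b2 + q + c"
    using block_decomp[of j] j by auto
  then show ?thesis
    using relay_block_zero[OF l c] t_nonneg unfolding relay_seq_def delay_block[OF l c] by simp
qed

end

context relay_code_params
begin

lemma destination_recovers:
  assumes E2: "burst_pattern b2 (T + 1) E2" and D: "msg_seq D" and t: "0 \<le> t"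
    and obs: "\<forall>u\<le>t + int T. u \<notin> E2 \<longrightarrow> (\<forall>j\<in>{1..T - b1 + b2}.
      packet (T - b1) (T - b1) (rd b2 p q) (relay_seq (delay b1 b2 p q) D) u j = 0)"
    and j: "j \<in> {1..T - b1}"
  shows "D t j = 0"
proof -
  have "\<forall>j\<in>{1..T - b1}. D (int n) j = 0" if "int n \<le> t" for n
    using that
  proof (induction n rule: less_induct)
    case (less n)
    obtain a where burst: "\<And>x. x \<in> E2 \<Longrightarrow> int n \<le> x \<Longrightarrow> x < int n + int (T + 1) \<Longrightarrow>
        a \<le> x \<and> x < a + int b2"
      using burst_pattern_window[OF E2, where s = "int n"] by blast
    interpret rd_decoding b1 b2 T p q D "int n" a
    proof
      fix x j assume x: "x < int n" and j: "j \<in> {1..T - b1}"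
      show "D x j = 0"
      proof (cases "x < 0")
        case True
        then show ?thesis using D by (simp add: msg_seq_def)
      next
        case False
        then obtain m where m: "x = int m"
          by (metis nonneg_int_cases not_less)
        then have "m < n"
          using x by simp
        then show ?thesis
          using less.IH[of m] less.prems x m j by simp
      qed
    next
      fix u j assume u: "int n \<le> u" "u \<le> int n + int T" "\<not> (a \<le> u \<and> u < a + int b2)"
        and j: "j \<in> {1..T - b1 + b2}"
      have "u \<notin> E2"
        using burst[of u] u by linarith
      moreover have "u \<le> t + int T"
        using u less.prems by linarith
      ultimately show "packet (T - b1) (T - b1) (rd b2 p q) (relay_seq (delay b1 b2 p q) D) u j = 0"
        using obs j by blast
    qed (use less.prems in simp)
    show ?case
      using message_zero by blast
  qed
  then show ?thesis
    using t j by (metis int_nat_eq order_refl)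
qed

theorem relay_scheme_valid:
  "tbsc_valid b1 b2 T (T - b1) (T - b1 + b2) (sr2 b1 b2 p q) (T - b2)
     (relay_seq (delay b1 b2 p q)) (rd b2 p q) (T - b1)"
  using relay_recovers destination_recovers by (intro tbsc_valid_linearI relay_seq_add) blast+

end

theorem mainTheorem6:
  fixes b1 b2 T p q :: nat
  assumes "0 < b1" and "b1 < b2" and "b1 + b2 \<le> T"
    and "T - b1 = p * b2 + q" and "1 \<le> p" and "1 \<le> q" and "q < b2"
    and "real (T - b2) / real b1 \<ge> of_int \<lfloor>real (T - b1) / real b2\<rfloor> + 1"
    and "of_int \<lfloor>real (T - b1) / real b2\<rfloor> + 1 = real (p + 1)"
  shows "tbsc_valid b1 b2 T (T - b1) (T - b1 + b2)
           (sr2 b1 b2 p q) (T - b2)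
           (relay_seq (delay b1 b2 p q))
           (rd b2 p q) (T - b1)
         \<and> code_rate (T - b1) (T - b1 + b2) = real (T - b1) / real (T - b1 + b2)
         \<and> real (T - b1) / real (T - b1 + b2) = R_opt b1 b2 T"
proof -
  have "real (p + 1) * real b1 \<le> real (T - b2)"
    using assms(1,8,9) by (simp add: pos_le_divide_eq)
  then have "(p + 1) * b1 \<le> T - b2"
    by (metis of_nat_le_iff of_nat_mult)
  then have "(p + 1) * b1 + b2 \<le> T"
    using assms(3) by linarith
  then interpret relay_code_params b1 b2 T p q
    using assms(1-7) by unfold_locales auto
  show ?thesis
    using relay_scheme_valid R_opt_eq[of b1 b2 T] assms(1-3) by (simp add: code_rate_def)
qed

end
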